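(* For all positive integers $n$ and $k$ with $k\equiv1\pmod 3$, $$\det\big(M_{n+i+j}^{(k)}\big)_{0\le i,j\le k-1}=(-1)^{n\lfloor (k+1)/3\rfloor}\Big(\frac{2k+4}{3}\Big)^{n-1}.$$
   Context: $M_N^{(k)}$ is the number of lattice paths from $(0,0)$ to $(N,0)$ with steps $(1,1)$, $(1,0)$, $(1,-1)$ that never go below the $x$-axis and never go above the line $y=k$ (bounded Motzkin paths). *)

theory Defs
  imports Main "Jordan_Normal_Form.Determinant"
begin

text \<open>A lattice path with steps (1,1),(1,0),(1,-1) starting at (0,0) is encoded by the
list of its vertical increments (each in {-1,0,1}).\<close>

definition bounded_motzkin_paths :: "nat \<Rightarrow> nat \<Rightarrow> int list set" where
  "bounded_motzkin_paths k N =
     {s. length s = N \<and> set s \<subseteq> {-1, 0, 1} \<and> sum_list s = 0 \<and>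
         (\<forall>i \<le> N. 0 \<le> sum_list (take i s) \<and> sum_list (take i s) \<le> int k)}"

definition motzkin_bounded :: "nat \<Rightarrow> nat \<Rightarrow> nat" where
  "motzkin_bounded k N = card (bounded_motzkin_paths k N)"

end

theory Submission
  imports Defs
begin

text \<open>
  Bounded Motzkin numbers are the corner entries \<open>M\<^sub>N = (T\<^sup>N)\<^sub>0\<^sub>0\<close> of the powers of the
  \<open>(k+1) \<times> (k+1)\<close> tridiagonal 0/1 matrix \<open>T\<close>, the transfer matrix of steps between heights
  \<open>0..k\<close>. Since \<open>(T\<^sup>i)\<^sub>0\<^sub>a\<close> vanishes for \<open>a > i\<close> and equals 1 for \<open>a = i\<close>, the Hankel
  matrix factors as \<open>F L\<^sub>n F\<^sup>T\<close> with \<open>F\<close> unitriangular and \<open>L\<^sub>n\<close> the leading \<open>k \<times> k\<close>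
  block of \<open>T\<^sup>n\<close>, so its determinant is \<open>det L\<^sub>n\<close>.

  For \<open>k = 3q + 1\<close> the vector \<open>z = (-1, 1, 0, -1, 1, 0, \<dots>, -1, 1)\<close> lies in the kernel of \<open>T\<close>,
  so the last column of \<open>T\<^sup>n\<close> (\<open>n \<ge> 1\<close>) is a combination of the others and
  \<open>L\<^sub>n\<^sub>+\<^sub>1 = L\<^sub>n X\<close> with \<open>X = (I + z' z'\<^sup>T) T\<^sub>k\<close>, where \<open>z'\<close> drops the last entry of \<open>z\<close>.
  By the rank-one determinant formula \<open>det X = (1 + |z'|\<^sup>2) det T\<^sub>k = (2q + 2)(-1)\<^sup>q\<close>, since
  \<open>det T\<^sub>m\<close> satisfies \<open>D\<^sub>m\<^sub>+\<^sub>2 = D\<^sub>m\<^sub>+\<^sub>1 - D\<^sub>m\<close> and is therefore 6-periodic.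
\<close>

lemma index_mult_mat_sum:
  assumes "A \<in> carrier_mat n p" "B \<in> carrier_mat p q" "i < n" "j < q"
  shows "(A * B) $$ (i, j) = (\<Sum>c<p. A $$ (i, c) * B $$ (c, j))"
  using assms by (simp add: scalar_prod_def atLeast0LessThan)

lemma pow_mat_add:
  assumes "A \<in> carrier_mat n n"
  shows "A ^\<^sub>m (a + b) = A ^\<^sub>m a * A ^\<^sub>m b"
proof (induction b)
  case (Suc b)
  have "A ^\<^sub>m (a + Suc b) = (A ^\<^sub>m a * A ^\<^sub>m b) * A" using Suc by simp
  also have "\<dots> = A ^\<^sub>m a * (A ^\<^sub>m b * A)" using assms by (simp add: assoc_mult_mat[of _ n n _ n _ n])
  finally show ?case by simp
qed (use assms in simp)

lemma pow_mat_Suc_left: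
  assumes "A \<in> carrier_mat n n"
  shows "A ^\<^sub>m Suc k = A * A ^\<^sub>m k"
  using pow_mat_add[OF assms, of 1 k] assms by simp

lemma det_one_plus_mult_commute:
  fixes A :: "'a :: idom mat"
  assumes A: "A \<in> carrier_mat k m" and B: "B \<in> carrier_mat m k"
  shows "det (1\<^sub>m k + A * B) = det (1\<^sub>m m + B * A)"
proof -
  define M where "M = four_block_mat (1\<^sub>m m) (- B) A (1\<^sub>m k)"
  define P where "P = four_block_mat (1\<^sub>m m) B (0\<^sub>m k m) (1\<^sub>m k)"
  have M: "M \<in> carrier_mat (m + k) (m + k)" and P: "P \<in> carrier_mat (m + k) (m + k)"
    unfolding M_def P_def using A B by (auto intro: four_block_carrier_mat)
  have "det P = 1"
    unfolding P_def by (subst det_four_block_mat_lower_left_zero[of _ m _ k]) (use B in auto)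
  then have det_MP: "det (M * P) = det (P * M)"
    using det_mult[OF M P] det_mult[OF P M] by simp
  have "M * P = four_block_mat (1\<^sub>m m) (0\<^sub>m m k) A (1\<^sub>m k + A * B)"
    unfolding M_def P_def
    by (subst mult_four_block_mat[OF one_carrier_mat uminus_carrier_mat[OF B] A one_carrier_mat
          one_carrier_mat B zero_carrier_mat one_carrier_mat])
      (use A B in \<open>auto intro!: eq_matI\<close>)
  moreover have "P * M = four_block_mat (1\<^sub>m m + B * A) (0\<^sub>m m k) A (1\<^sub>m k)"
    unfolding M_def P_def
    by (subst mult_four_block_mat[OF one_carrier_mat B zero_carrier_mat one_carrier_mat
          one_carrier_mat uminus_carrier_mat[OF B] A one_carrier_mat])
      (use A B in \<open>auto intro!: eq_matI\<close>)
  ultimately show ?thesis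
    using det_MP A B by (simp add: det_four_block_mat_upper_right_zero[of _ m _ k])
qed

definition tridiag_ones :: "nat \<Rightarrow> 'a :: {zero, one} mat" where
  "tridiag_ones m = mat m m (\<lambda>(i, j). if i = j \<or> i = Suc j \<or> j = Suc i then 1 else 0)"

lemma tridiag_ones_carrier [simp]: "tridiag_ones m \<in> carrier_mat m m"
  and dim_tridiag_ones [simp]: "dim_row (tridiag_ones m) = m" "dim_col (tridiag_ones m) = m"
  by (auto simp: tridiag_ones_def)

lemma tridiag_ones_sym: "i < m \<Longrightarrow> j < m \<Longrightarrow> tridiag_ones m $$ (i, j) = tridiag_ones m $$ (j, i)"
  by (auto simp: tridiag_ones_def)

lemma index_tridiag_ones_Suc:
  "i < m \<Longrightarrow> j < m \<Longrightarrow> tridiag_ones (Suc m) $$ (i, j) = tridiag_ones m $$ (i, j)"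
  by (simp add: tridiag_ones_def)

lemma tridiag_ones_row_sum:
  fixes f :: "nat \<Rightarrow> 'a :: semiring_1"
  assumes "i < m"
  shows "(\<Sum>c<m. tridiag_ones m $$ (i, c) * f c) =
    (if 0 < i then f (i - 1) else 0) + f i + (if Suc i < m then f (Suc i) else 0)"
proof -
  have "(\<Sum>c<m. tridiag_ones m $$ (i, c) * f c) =
    (\<Sum>c<m. (if 0 < i \<and> c = i - 1 then f c else 0) + (if c = i then f c else 0)
            + (if c = Suc i then f c else 0))"
    using assms by (intro sum.cong) (auto simp: tridiag_ones_def)
  also have "\<dots> = (if 0 < i then f (i - 1) else 0) + f i + (if Suc i < m then f (Suc i) else 0)"
    using assms by (cases "0 < i") (auto simp: sum.distrib sum.delta')
  finally show ?thesis .
qed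

lemma index_tridiag_ones_mult:
  fixes B :: "'a :: semiring_1 mat"
  assumes "B \<in> carrier_mat m q" "i < m" "j < q"
  shows "(tridiag_ones m * B) $$ (i, j) =
    (if 0 < i then B $$ (i - 1, j) else 0) + B $$ (i, j) + (if Suc i < m then B $$ (Suc i, j) else 0)"
  using assms by (simp only: index_mult_mat_sum[of _ m m] tridiag_ones_carrier tridiag_ones_row_sum)

fun stays_in_strip :: "nat \<Rightarrow> int \<Rightarrow> int list \<Rightarrow> bool" where
  "stays_in_strip k h [] = True"
| "stays_in_strip k h (d # s) \<longleftrightarrow>
     d \<in> {-1, 0, 1} \<and> 0 \<le> h + d \<and> h + d \<le> int k \<and> stays_in_strip k (h + d) s"

definition strip_paths :: "nat \<Rightarrow> nat \<Rightarrow> int \<Rightarrow> int \<Rightarrow> int list set" where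
  "strip_paths k N a b = {s. length s = N \<and> stays_in_strip k a s \<and> a + sum_list s = b}"

lemma stays_in_strip_iff:
  assumes "0 \<le> h" "h \<le> int k"
  shows "stays_in_strip k h s \<longleftrightarrow> set s \<subseteq> {-1, 0, 1} \<and>
    (\<forall>i \<le> length s. 0 \<le> h + sum_list (take i s) \<and> h + sum_list (take i s) \<le> int k)"
  using assms
proof (induction s arbitrary: h)
  case (Cons d s)
  have all_le_Suc: "(\<forall>i \<le> Suc n. P i) \<longleftrightarrow> P 0 \<and> (\<forall>i \<le> n. P (Suc i))" for P and n :: nat
    by (metis Suc_le_mono le0 not0_implies_Suc)
  show ?case
  proof (cases "0 \<le> h + d \<and> h + d \<le> int k")
    case True
    then show ?thesis
      using Cons.IH[of "h + d"] Cons.prems by (auto simp: all_le_Suc add.assoc)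
  next
    case False
    then show ?thesis
      by (auto simp: all_le_Suc add.assoc dest: spec[of _ 0])
  qed
qed simp

lemma bounded_motzkin_paths_eq_strip_paths: "bounded_motzkin_paths k N = strip_paths k N 0 0"
  using stays_in_strip_iff[of 0 k]
  unfolding bounded_motzkin_paths_def strip_paths_def by auto

lemma stays_in_strip_steps: "stays_in_strip k h s \<Longrightarrow> set s \<subseteq> {-1, 0, 1}"
  by (induction s arbitrary: h) auto

lemma finite_strip_paths: "finite (strip_paths k N a b)"
proof (rule finite_subset)
  show "strip_paths k N a b \<subseteq> {s. set s \<subseteq> {-1, 0, 1} \<and> length s = N}"
    by (auto simp: strip_paths_def dest: stays_in_strip_steps)
qed (simp add: finite_lists_length_eq)

lemma strip_paths_Suc:
  "strip_paths k (Suc N) h b =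
    (\<Union>d \<in> {d \<in> {-1, 0, 1}. 0 \<le> h + d \<and> h + d \<le> int k}. (#) d ` strip_paths k N (h + d) b)"
proof (intro equalityI subsetI)
  fix s
  assume "s \<in> strip_paths k (Suc N) h b"
  then obtain d s' where "s = d # s'" "length s' = N" "stays_in_strip k h (d # s')"
    "h + sum_list (d # s') = b"
    by (auto simp: strip_paths_def length_Suc_conv)
  then show "s \<in> (\<Union>d \<in> {d \<in> {-1, 0, 1}. 0 \<le> h + d \<and> h + d \<le> int k}. (#) d ` strip_paths k N (h + d) b)"
    by (intro UN_I[of d]) (auto simp: strip_paths_def add.assoc)
qed (auto simp: strip_paths_def add.assoc)

lemma strip_paths_0: "strip_paths k 0 a b = (if a = b then {[]} else {})"
  by (auto simp: strip_paths_def)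

lemma card_strip_paths_Suc:
  assumes "a \<le> k"
  shows "card (strip_paths k (Suc N) (int a) b) =
    (if 0 < a then card (strip_paths k N (int a - 1) b) else 0) + card (strip_paths k N (int a) b)
    + (if a < k then card (strip_paths k N (int a + 1) b) else 0)"
proof -
  let ?c = "\<lambda>d. card (strip_paths k N (int a + d) b)"
  have "card (strip_paths k (Suc N) (int a) b) =
    (\<Sum>d \<in> {d \<in> {-1, 0, 1}. 0 \<le> int a + d \<and> int a + d \<le> int k}. ?c d)"
    unfolding strip_paths_Suc
    by (subst card_UN_disjoint) (auto simp: finite_strip_paths card_image)
  also have "\<dots> = (\<Sum>d \<in> {-1, 0, 1}. if 0 \<le> int a + d \<and> int a + d \<le> int k then ?c d else 0)"
    by (rule sum.inter_filter) simp
  finally show ?thesis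
    using assms by simp
qed

lemma of_nat_card_strip_paths:
  assumes "a \<le> k" "b \<le> k"
  shows "(of_nat (card (strip_paths k N (int a) (int b))) :: 'a :: semiring_1)
    = (tridiag_ones (Suc k) ^\<^sub>m N) $$ (a, b)"
  using assms(1)
proof (induction N arbitrary: a)
  case 0
  then show ?case
    using assms by (simp add: strip_paths_0)
next
  case (Suc N)
  let ?T = "tridiag_ones (Suc k) :: 'a mat"
  have "(?T ^\<^sub>m Suc N) $$ (a, b) = (?T * ?T ^\<^sub>m N) $$ (a, b)"
    by (simp only: pow_mat_Suc_left[OF tridiag_ones_carrier])
  also have "\<dots> = (if 0 < a then (?T ^\<^sub>m N) $$ (a - 1, b) else 0) + (?T ^\<^sub>m N) $$ (a, b)
      + (if Suc a < Suc k then (?T ^\<^sub>m N) $$ (Suc a, b) else 0)"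
    using Suc.prems assms by (intro index_tridiag_ones_mult) auto
  also have "\<dots> = of_nat (card (strip_paths k (Suc N) (int a) (int b)))"
    using Suc.IH[of "a - 1"] Suc.IH[of a] Suc.IH[of "Suc a"] Suc.prems
    by (auto simp: card_strip_paths_Suc of_nat_diff add.commute)
  finally show ?case ..
qed

lemma of_nat_motzkin_bounded:
  "(of_nat (motzkin_bounded k N) :: 'a :: semiring_1) = (tridiag_ones (Suc k) ^\<^sub>m N) $$ (0, 0)"
  using of_nat_card_strip_paths[of 0 k 0 N]
  by (simp add: motzkin_bounded_def bounded_motzkin_paths_eq_strip_paths)

lemma tridiag_ones_pow_col0:
  assumes "j \<le> b" "b < m"
  shows "(tridiag_ones m ^\<^sub>m j :: 'a :: semiring_1 mat) $$ (b, 0) = (if b = j then 1 else 0)"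
  using assms
proof (induction j arbitrary: b)
  case (Suc j)
  let ?T = "tridiag_ones m :: 'a mat"
  have "(?T ^\<^sub>m Suc j) $$ (b, 0) = (?T * ?T ^\<^sub>m j) $$ (b, 0)"
    by (simp only: pow_mat_Suc_left[OF tridiag_ones_carrier])
  also have "\<dots> = (if 0 < b then (?T ^\<^sub>m j) $$ (b - 1, 0) else 0) + (?T ^\<^sub>m j) $$ (b, 0)
      + (if Suc b < m then (?T ^\<^sub>m j) $$ (Suc b, 0) else 0)"
    using Suc.prems by (intro index_tridiag_ones_mult) auto
  also have "\<dots> = (if b = Suc j then 1 else 0)"
    using Suc.IH[of "b - 1"] Suc.IH[of b] Suc.IH[of "Suc b"] Suc.prems by auto
  finally show ?case .
qed simp

lemma tridiag_ones_pow_sym: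
  assumes "a < m" "b < m"
  shows "(tridiag_ones m ^\<^sub>m j :: 'a :: comm_semiring_1 mat) $$ (a, b) = (tridiag_ones m ^\<^sub>m j) $$ (b, a)"
  using assms
proof (induction j arbitrary: a b)
  case (Suc j)
  let ?T = "tridiag_ones m :: 'a mat"
  have "(?T ^\<^sub>m Suc j) $$ (a, b) = (\<Sum>c<m. ?T $$ (a, c) * (?T ^\<^sub>m j) $$ (c, b))"
    unfolding pow_mat_Suc_left[OF tridiag_ones_carrier]
    using Suc.prems by (intro index_mult_mat_sum) auto
  also have "\<dots> = (\<Sum>c<m. (?T ^\<^sub>m j) $$ (b, c) * ?T $$ (c, a))"
    using Suc by (intro sum.cong) (auto simp: tridiag_ones_sym mult.commute)
  also have "\<dots> = (?T ^\<^sub>m Suc j) $$ (b, a)"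
    unfolding pow_mat.simps
    using Suc.prems by (intro index_mult_mat_sum[symmetric]) auto
  finally show ?case .
qed simp

lemma tridiag_ones_pow_row0:
  assumes "j \<le> b" "b < m"
  shows "(tridiag_ones m ^\<^sub>m j :: 'a :: comm_semiring_1 mat) $$ (0, b) = (if b = j then 1 else 0)"
  using assms by (simp add: tridiag_ones_pow_sym[of 0 m b] tridiag_ones_pow_col0)

definition leading_block :: "nat \<Rightarrow> nat \<Rightarrow> 'a :: semiring_1 mat" where
  "leading_block k n = mat k k (\<lambda>(i, j). (tridiag_ones (Suc k) ^\<^sub>m n) $$ (i, j))"

definition first_row_powers :: "nat \<Rightarrow> 'a :: semiring_1 mat" where
  "first_row_powers k = mat k k (\<lambda>(i, a). (tridiag_ones (Suc k) ^\<^sub>m i) $$ (0, a))"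

lemma leading_block_carrier [simp]: "leading_block k n \<in> carrier_mat k k"
  and dim_leading_block [simp]: "dim_row (leading_block k n) = k" "dim_col (leading_block k n) = k"
  by (auto simp: leading_block_def)

lemma first_row_powers_carrier [simp]: "first_row_powers k \<in> carrier_mat k k"
  and dim_first_row_powers [simp]: "dim_row (first_row_powers k) = k" "dim_col (first_row_powers k) = k"
  by (auto simp: first_row_powers_def)

lemma det_first_row_powers: "det (first_row_powers k :: 'a :: comm_ring_1 mat) = 1"
proof -
  have "det (first_row_powers k :: 'a mat) = prod_list (diag_mat (first_row_powers k :: 'a mat))"
    by (rule det_lower_triangular[of k]) (auto simp: first_row_powers_def tridiag_ones_pow_row0)
  also have "\<dots> = 1"
    by (simp add: prod_list_diag_prod first_row_powers_def tridiag_ones_pow_row0)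
  finally show ?thesis .
qed

lemma motzkin_hankel_factorization:
  "mat k k (\<lambda>(i, j). of_nat (motzkin_bounded k (n + i + j)) :: 'a :: comm_semiring_1)
    = first_row_powers k * (leading_block k n * (first_row_powers k)\<^sup>T)"
proof (rule eq_matI)
  fix i j
  assume "i < dim_row (first_row_powers k * (leading_block k n * (first_row_powers k)\<^sup>T) :: 'a mat)"
    and "j < dim_col (first_row_powers k * (leading_block k n * (first_row_powers k)\<^sup>T) :: 'a mat)"
  then have i: "i < k" and j: "j < k" by auto
  let ?T = "tridiag_ones (Suc k) :: 'a mat"
    and ?F = "first_row_powers k :: 'a mat" and ?L = "leading_block k n :: 'a mat"
  have T: "?T \<in> carrier_mat (Suc k) (Suc k)" by simp
  have "(of_nat (motzkin_bounded k (n + i + j)) :: 'a) = (?T ^\<^sub>m i * (?T ^\<^sub>m n * ?T ^\<^sub>m j)) $$ (0, 0)"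
    by (simp add: of_nat_motzkin_bounded pow_mat_add[OF T, symmetric] add_ac)
  also have "\<dots> = (\<Sum>a<Suc k. (?T ^\<^sub>m i) $$ (0, a) * (?T ^\<^sub>m n * ?T ^\<^sub>m j) $$ (a, 0))"
    by (rule index_mult_mat_sum) auto
  also have "\<dots> = (\<Sum>a<Suc k. (?T ^\<^sub>m i) $$ (0, a) *
      (\<Sum>b<Suc k. (?T ^\<^sub>m n) $$ (a, b) * (?T ^\<^sub>m j) $$ (0, b)))"
    by (intro sum.cong refl arg_cong2[where f = "(*)"] trans[OF index_mult_mat_sum])
      (auto simp: tridiag_ones_pow_sym[of _ _ 0])
  also have "\<dots> = (\<Sum>a<k. (?T ^\<^sub>m i) $$ (0, a) *
      (\<Sum>b<k. (?T ^\<^sub>m n) $$ (a, b) * (?T ^\<^sub>m j) $$ (0, b)))"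
    using i j by (simp add: tridiag_ones_pow_row0)
  also have "\<dots> = (\<Sum>a<k. ?F $$ (i, a) * (\<Sum>b<k. ?L $$ (a, b) * ?F\<^sup>T $$ (b, j)))"
    using i j by (simp add: first_row_powers_def leading_block_def)
  also have "\<dots> = (\<Sum>a<k. ?F $$ (i, a) * (?L * ?F\<^sup>T) $$ (a, j))"
    using j by (intro sum.cong refl arg_cong2[where f = "(*)"] index_mult_mat_sum[symmetric]) auto
  also have "\<dots> = (?F * (?L * ?F\<^sup>T)) $$ (i, j)"
    using i j by (intro index_mult_mat_sum[symmetric]) auto
  finally show "mat k k (\<lambda>(i, j). of_nat (motzkin_bounded k (n + i + j))) $$ (i, j)
      = (?F * (?L * ?F\<^sup>T)) $$ (i, j)"
    using i j by simp
qed auto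

lemma det_motzkin_hankel:
  "det (mat k k (\<lambda>(i, j). of_nat (motzkin_bounded k (n + i + j))) :: 'a :: idom mat)
    = det (leading_block k n)"
proof -
  let ?F = "first_row_powers k :: 'a mat" and ?L = "leading_block k n :: 'a mat"
  have "det (?F * (?L * ?F\<^sup>T)) = det ?F * det (?L * ?F\<^sup>T)"
    by (rule det_mult) auto
  also have "det (?L * ?F\<^sup>T) = det ?L * det ?F\<^sup>T"
    by (rule det_mult) auto
  finally show ?thesis
    unfolding motzkin_hankel_factorization by (simp add: det_transpose[of _ k] det_first_row_powers)
qed

definition kernel_pattern :: "nat \<Rightarrow> 'a :: comm_ring_1" where
  "kernel_pattern i = (if i mod 3 = 0 then -1 else if i mod 3 = 1 then 1 else 0)"

lemma tridiag_ones_row_sum_kernel_pattern: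
  assumes "i < m"
  shows "(\<Sum>c<m. tridiag_ones m $$ (i, c) * kernel_pattern c) =
    (if Suc i = m then - kernel_pattern m else (0 :: 'a :: comm_ring_1))"
proof -
  have "(if 0 < i then kernel_pattern (i - 1) else 0) + kernel_pattern i + kernel_pattern (Suc i) = (0 :: 'a)"
    by (cases i) (auto simp: kernel_pattern_def mod_Suc)
  then show ?thesis
    using assms by (auto simp: tridiag_ones_row_sum eq_neg_iff_add_eq_0 add_ac split: if_splits)
qed

lemma tridiag_ones_pow_row_sum_kernel_pattern:
  assumes "k mod 3 = 1" "i \<le> k"
  shows "(\<Sum>c<Suc k. (tridiag_ones (Suc k) ^\<^sub>m Suc n) $$ (i, c) * kernel_pattern c) = (0 :: 'a :: comm_ring_1)"
proof -
  let ?T = "tridiag_ones (Suc k) :: 'a mat"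
  have "(\<Sum>c<Suc k. (?T ^\<^sub>m Suc n) $$ (i, c) * kernel_pattern c)
      = (\<Sum>c<Suc k. (\<Sum>d<Suc k. (?T ^\<^sub>m n) $$ (i, d) * ?T $$ (d, c)) * kernel_pattern c)"
    unfolding pow_mat.simps using assms
    by (intro sum.cong refl arg_cong2[where f = "(*)"] index_mult_mat_sum) auto
  also have "\<dots> = (\<Sum>d<Suc k. (?T ^\<^sub>m n) $$ (i, d) * (\<Sum>c<Suc k. ?T $$ (d, c) * kernel_pattern c))"
    by (simp only: sum_distrib_left sum_distrib_right mult.assoc) (rule sum.swap)
  also have "\<dots> = 0"
  proof -
    have "kernel_pattern (Suc k) = (0 :: 'a)"
      using assms by (simp add: kernel_pattern_def mod_Suc)
    moreover have "(\<Sum>c<Suc k. ?T $$ (d, c) * kernel_pattern c) =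
        (if Suc d = Suc k then - kernel_pattern (Suc k) else 0)" if "d < Suc k" for d
      by (rule tridiag_ones_row_sum_kernel_pattern[OF that])
    ultimately have row: "(\<Sum>c<Suc k. ?T $$ (d, c) * kernel_pattern c) = 0" if "d < Suc k" for d
      using that by simp
    show ?thesis
      by (metis (no_types, lifting) lessThan_iff mult_zero_right row sum.neutral)
  qed
  finally show ?thesis .
qed

definition kernel_col :: "nat \<Rightarrow> 'a :: comm_ring_1 mat" where
  "kernel_col k = mat k 1 (\<lambda>(i, _). kernel_pattern i)"

definition leading_block_step :: "nat \<Rightarrow> 'a :: comm_ring_1 mat" where
  "leading_block_step k = (1\<^sub>m k + kernel_col k * (kernel_col k)\<^sup>T) * tridiag_ones k"

lemma kernel_col_carrier [simp]: "kernel_col k \<in> carrier_mat k 1"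
  and dim_kernel_col [simp]: "dim_row (kernel_col k) = k" "dim_col (kernel_col k) = 1"
  by (auto simp: kernel_col_def)

lemma leading_block_step_carrier [simp]: "leading_block_step k \<in> carrier_mat k k"
  unfolding leading_block_step_def by (intro mult_carrier_mat add_carrier_mat) auto

lemma dim_leading_block_step [simp]:
  "dim_row (leading_block_step k) = k" "dim_col (leading_block_step k) = k"
  using leading_block_step_carrier by blast+

lemma index_leading_block_step:
  assumes "k mod 3 = 1" "i < k" "j < k"
  shows "leading_block_step k $$ (i, j) =
    tridiag_ones k $$ (i, j) - (if j = k - 1 then kernel_pattern i else 0)"
proof -
  let ?T = "tridiag_ones k :: 'a mat" and ?z = "kernel_pattern :: nat \<Rightarrow> 'a"
  have "leading_block_step k $$ (i, j) = (\<Sum>c<k. ((if c = i then 1 else 0) + ?z i * ?z c) * ?T $$ (c, j))"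
    unfolding leading_block_step_def using assms
    by (simp add: index_mult_mat_sum[of _ k k] kernel_col_def scalar_prod_def atLeast0LessThan)
  also have "\<dots> = (\<Sum>c<k. (if c = i then ?T $$ (c, j) else 0) + ?z i * (?T $$ (j, c) * ?z c))"
    using assms by (intro sum.cong refl) (auto simp: tridiag_ones_sym algebra_simps)
  also have "\<dots> = ?T $$ (i, j) + ?z i * (\<Sum>c<k. ?T $$ (j, c) * ?z c)"
    using assms by (simp add: sum.distrib sum_distrib_left sum.delta')
  also have "(\<Sum>c<k. ?T $$ (j, c) * ?z c) = (if j = k - 1 then -1 else 0)"
    using tridiag_ones_row_sum_kernel_pattern[of j k] assms
    by (auto simp: kernel_pattern_def)
  finally show ?thesis by simp
qed

lemma leading_block_Suc_Suc:
  assumes "k mod 3 = 1"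
  shows "leading_block k (Suc (Suc n)) = leading_block k (Suc n) * (leading_block_step k :: 'a :: comm_ring_1 mat)"
proof (rule eq_matI)
  fix i j
  assume "i < dim_row (leading_block k (Suc n) * (leading_block_step k :: 'a mat))"
    and "j < dim_col (leading_block k (Suc n) * (leading_block_step k :: 'a mat))"
  then have i: "i < k" and j: "j < k" by auto
  let ?T = "tridiag_ones (Suc k) :: 'a mat" and ?z = "kernel_pattern :: nat \<Rightarrow> 'a"
  let ?P = "?T ^\<^sub>m Suc n"
  have "(\<Sum>c<k. ?P $$ (i, c) * ?z c) + ?P $$ (i, k) = 0"
    using tridiag_ones_pow_row_sum_kernel_pattern[OF assms, of i n] i assms
    by (simp add: kernel_pattern_def)
  then have last_col: "?P $$ (i, k) = - (\<Sum>c<k. ?P $$ (i, c) * ?z c)"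
    by (simp add: eq_neg_iff_add_eq_0 add.commute)
  have last_row: "?T $$ (k, j) = (if j = k - 1 then 1 else 0)"
    using j by (auto simp: tridiag_ones_def)
  have "leading_block k (Suc (Suc n)) $$ (i, j) = (?P * ?T) $$ (i, j)"
    using i j by (simp add: leading_block_def)
  also have "\<dots> = (\<Sum>c<Suc k. ?P $$ (i, c) * ?T $$ (c, j))"
    using i j by (intro index_mult_mat_sum[of _ "Suc k" "Suc k" _ "Suc k"]) auto
  also have "\<dots> = (\<Sum>c<k. ?P $$ (i, c) * tridiag_ones k $$ (c, j)) + ?P $$ (i, k) * ?T $$ (k, j)"
    using j by (simp add: index_tridiag_ones_Suc)
  also have "\<dots> = (\<Sum>c<k. ?P $$ (i, c) * tridiag_ones k $$ (c, j))
      - (if j = k - 1 then (\<Sum>c<k. ?P $$ (i, c) * ?z c) else 0)"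
    unfolding last_col last_row by simp
  also have "\<dots> = (\<Sum>c<k. leading_block k (Suc n) $$ (i, c) * leading_block_step k $$ (c, j))"
    using i j assms
    by (simp add: leading_block_def index_leading_block_step right_diff_distrib sum_subtractf)
  also have "\<dots> = (leading_block k (Suc n) * leading_block_step k) $$ (i, j)"
    using i j by (intro index_mult_mat_sum[symmetric]) auto
  finally show "leading_block k (Suc (Suc n)) $$ (i, j)
      = (leading_block k (Suc n) * (leading_block_step k :: 'a mat)) $$ (i, j)" .
qed auto

lemma leading_block_1: "leading_block k (Suc 0) = tridiag_ones k"
  by (rule eq_matI) (auto simp: leading_block_def tridiag_ones_def)

lemma det_leading_block:
  assumes "k mod 3 = 1"
  shows "det (leading_block k (Suc n) :: 'a :: comm_ring_1 mat)
    = det (tridiag_ones k :: 'a mat) * det (leading_block_step k :: 'a mat) ^ n"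
proof (induction n)
  case (Suc n)
  then show ?case
    by (simp add: leading_block_Suc_Suc[OF assms] det_mult[of _ k])
qed (simp add: leading_block_1)

lemma det_leading_block_step:
  "det (leading_block_step k :: 'a :: idom mat) = (1 + (\<Sum>i<k. kernel_pattern i ^ 2)) * det (tridiag_ones k :: 'a mat)"
proof -
  let ?Z = "kernel_col k :: 'a mat"
  have "det (1\<^sub>m k + ?Z * ?Z\<^sup>T) = det (1\<^sub>m 1 + ?Z\<^sup>T * ?Z)"
    by (rule det_one_plus_mult_commute) auto
  also have "\<dots> = 1 + (\<Sum>i<k. kernel_pattern i ^ 2)"
    by (subst det_single) (auto simp: kernel_col_def scalar_prod_def atLeast0LessThan power2_eq_square)
  finally show ?thesis
    unfolding leading_block_step_def by (subst det_mult[of _ k]) auto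
qed

lemma sum_kernel_pattern_squares: "(\<Sum>i<3 * q + 1. kernel_pattern i ^ 2) = (2 * of_nat q + 1 :: 'a :: comm_ring_1)"
proof (induction q)
  case (Suc q)
  have split: "3 * Suc q + 1 = Suc (Suc (Suc (3 * q + 1)))" by simp
  have "(3 * q + 1) mod 3 = 1" "Suc (3 * q + 1) mod 3 = 2" "Suc (Suc (3 * q + 1)) mod 3 = 0"
    by presburger+
  then show ?case
    unfolding split using Suc by (simp add: kernel_pattern_def)
qed (simp add: kernel_pattern_def)

lemma det_tridiag_ones_Suc_Suc:
  "det (tridiag_ones (Suc (Suc m)) :: 'a :: comm_ring_1 mat)
    = det (tridiag_ones (Suc m) :: 'a mat) - det (tridiag_ones m :: 'a mat)"
proof -
  let ?T = "tridiag_ones (Suc (Suc m)) :: 'a mat"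
  define N where "N = mat_delete ?T (Suc m) m"
  have N: "N \<in> carrier_mat (Suc m) (Suc m)"
    unfolding N_def using mat_delete_carrier[OF tridiag_ones_carrier, of "Suc (Suc m)" "Suc m" m] by simp
  have last_col_N: "i < Suc m \<Longrightarrow> N $$ (i, m) = (if i = m then 1 else 0)" for i
    by (auto simp: N_def mat_delete_def tridiag_ones_def)
  have "det N = (\<Sum>i<Suc m. N $$ (i, m) * cofactor N i m)"
    by (rule laplace_expansion_column[OF N]) simp
  also have "\<dots> = (\<Sum>i<Suc m. if i = m then cofactor N i m else 0)"
    by (intro sum.cong refl) (simp add: last_col_N)
  also have "\<dots> = cofactor N m m"
    by (simp add: sum.delta')
  also have "\<dots> = det (tridiag_ones m)"
    unfolding cofactor_def N_def
    by (simp, intro arg_cong[where f = det] eq_matI) (auto simp: mat_delete_def tridiag_ones_def)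
  finally have det_N: "det N = det (tridiag_ones m :: 'a mat)" .
  have "det ?T = (\<Sum>c<Suc (Suc m). ?T $$ (Suc m, c) * cofactor ?T (Suc m) c)"
    by (rule laplace_expansion_row) auto
  also have "\<dots> = cofactor ?T (Suc m) m + cofactor ?T (Suc m) (Suc m)"
    by (simp add: tridiag_ones_def)
  also have "cofactor ?T (Suc m) m = - det (tridiag_ones m :: 'a mat)"
    using det_N by (simp add: cofactor_def N_def)
  also have "cofactor ?T (Suc m) (Suc m) = det (tridiag_ones (Suc m) :: 'a mat)"
    unfolding cofactor_def
    by (simp, intro arg_cong[where f = det] eq_matI) (auto simp: mat_delete_def tridiag_ones_def)
  finally show ?thesis by simp
qed

lemma det_tridiag_ones_mod_3:
  "det (tridiag_ones (3 * q) :: 'a :: comm_ring_1 mat) = (-1) ^ q \<and>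
   det (tridiag_ones (3 * q + 1) :: 'a mat) = (-1) ^ q \<and>
   det (tridiag_ones (3 * q + 2) :: 'a mat) = 0"
proof (induction q)
  case 0
  have "det (tridiag_ones 0 :: 'a mat) = 1" "det (tridiag_ones 1 :: 'a mat) = 1"
    by (simp_all add: det_dim_zero det_single tridiag_ones_def)
  then show ?case
    using det_tridiag_ones_Suc_Suc[of 0, where 'a = 'a] by (simp add: numeral_2_eq_2)
next
  case (Suc q)
  have "3 * Suc q = Suc (Suc (3 * q + 1))" "3 * q + 2 = Suc (3 * q + 1)"
    "3 * Suc q + 1 = Suc (Suc (3 * q + 2))" "3 * Suc q = Suc (3 * q + 2)"
    "3 * Suc q + 2 = Suc (Suc (3 * Suc q))" "3 * Suc q + 1 = Suc (3 * Suc q)"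
    by simp_all
  then have "det (tridiag_ones (3 * Suc q) :: 'a mat)
        = det (tridiag_ones (3 * q + 2) :: 'a mat) - det (tridiag_ones (3 * q + 1) :: 'a mat)"
      "det (tridiag_ones (3 * Suc q + 1) :: 'a mat)
        = det (tridiag_ones (3 * Suc q) :: 'a mat) - det (tridiag_ones (3 * q + 2) :: 'a mat)"
      "det (tridiag_ones (3 * Suc q + 2) :: 'a mat)
        = det (tridiag_ones (3 * Suc q + 1) :: 'a mat) - det (tridiag_ones (3 * Suc q) :: 'a mat)"
    by (metis det_tridiag_ones_Suc_Suc)+
  then show ?case
    using Suc by simp
qed

theorem theorem54:
  fixes n k :: nat
  assumes "n > 0" and "k > 0" and "k mod 3 = 1"
  shows "det (mat k k (\<lambda>(i, j). of_nat (motzkin_bounded k (n + i + j)) :: rat))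
         = (-1) ^ (n * ((k + 1) div 3)) * ((2 * of_nat k + 4) / 3) ^ (n - 1)"
proof -
  obtain q where k: "k = 3 * q + 1"
    using assms(3) by (metis div_mod_decomp mult.commute)
  obtain m where n: "n = Suc m"
    using assms(1) by (cases n) auto
  have det_T: "det (tridiag_ones k :: rat mat) = (-1) ^ q"
    using det_tridiag_ones_mod_3[of q, where 'a = rat] k by simp
  have squares: "(\<Sum>i<k. kernel_pattern i ^ 2) = 2 * of_nat q + (1 :: rat)"
    unfolding k by (rule sum_kernel_pattern_squares)
  have "det (mat k k (\<lambda>(i, j). of_nat (motzkin_bounded k (n + i + j)) :: rat))
      = det (tridiag_ones k :: rat mat) * det (leading_block_step k :: rat mat) ^ m"
    unfolding det_motzkin_hankel n by (rule det_leading_block[OF assms(3)])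
  also have "\<dots> = (-1) ^ q * ((2 * of_nat q + 2) * (-1) ^ q) ^ m"
    by (simp add: det_leading_block_step det_T squares add.commute)
  also have "\<dots> = (-1) ^ (n * q) * (2 * of_nat q + 2) ^ m"
    by (simp add: n power_mult_distrib power_add power_mult[symmetric] mult.commute)
  finally have "det (mat k k (\<lambda>(i, j). of_nat (motzkin_bounded k (n + i + j)) :: rat))
      = (-1) ^ (n * q) * (2 * of_nat q + 2) ^ m" .
  moreover have "(k + 1) div 3 = q" and "(2 * of_nat k + 4) / 3 = (2 * of_nat q + 2 :: rat)"
    using k by simp_all
  ultimately show ?thesis
    using n by (simp only: diff_Suc_1)
qed

end
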